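(* Let $(E,\varepsilon)$ be a pointed set, $(\Omega,D)$ a recombination chromology and $b\in\Omega$ an element such that $(\Omega,D,FE_b^{\varepsilon})$ is a recombination scheme. Then for every sequence alignment $(\iota,T,\sigma)$ over $\mathbf{2}E_b^{\varepsilon}$, the functor $D_ET:\mathbf{Seg}(\Omega)\to\mathbf{Icm}$ is a $\mathcal{W}^{\mathrm{mon}}$-pedigrad for $(\Omega,D)$.
   Context: Segments and $\mathbf{Seg}(\Omega)$: for $n\ge1$, $[n]=\{1,\dots,n\}$, $[0]=\emptyset$. For a pre-ordered set $(\Omega,\preceq)$, a segment is $(t,c)$ with $t:[n_1]\to[n_0]$ an order-preserving surjection and $c:[n_0]\to\Omega$; a morphism $(t,c)\to(t',c')$ is $(f_1,f_0)$ with $f_1:[n_1]\to[n_1']$ order-preserving injective, $f_0:[n_0]\to[n_0']$ order-preserving, $t'f_1=f_0t$, $c'(f_0(i))\preceq c(i)$. $\mathbf{Seg}(\Omega\,|\,n)$: segments of domain $[n]$ and morphisms with $f_1=\mathrm{id}$. A recombination chromology $(\Omega,D)$: for each $n\ge0$ a finite set $D[n]$ of wide spans (finite families $\rho_i:\tau\to\theta(i)$, $i\in[k]$) in $\mathbf{Seg}(\Omega\,|\,n)$, called cones of $D$. Ic-monoids: $\mathbf{Icm}$ is the category of idempotent commutative monoids; $F:\mathbf{Set}\to\mathbf{Icm}$ is the free functor ($F(S)$ = finite subsets of $S$ under union), left adjoint to the forgetful functor; $F$ is applied to $\mathbf{Set}$-valued functors objectwise. Environment functors: $\mathsf{Tr}_b(t,c)=\{i\in[n_1]: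 b\preceq c(t(i))\}$. $E_b^{\varepsilon}:\mathbf{Seg}(\Omega)\to\mathbf{Set}$ sends $(t,c)$ to the set of functions $u:\mathsf{Tr}_b(t,c)\to E$ and a morphism $(f_1,f_0):(t,c)\to(t',c')$ to the map $u\mapsto u'$ where $u'(j)=u(i)$ if $j=f_1(i)$ with $i\in\mathsf{Tr}_b(t,c)$, and $u'(j)=\varepsilon$ otherwise. $\mathbf{2}E_b^{\varepsilon}=E_b^{\varepsilon}\times E_b^{\varepsilon}$ (objectwise product). Recombination congruences and monoids: for $X:\mathbf{Seg}(\Omega)\to\mathbf{Icm}$ and a cone $\rho$ of $D$ with apex $\upsilon$, $X[\rho]:X(\upsilon)\to\prod_iX(\theta(i))$ has components $X(\rho_i)$ and $\mathsf{prj}_1,\mathsf{prj}_2:G(X,\rho)\rightrightarrows X(\upsilon)$ is its kernel pair. $DX$ is the functor with $q_X:X(\tau)\to DX(\tau)$ the universal $\mathbf{Icm}$-morphism with $q_X\circ X(f)\circ\mathsf{prj}_1=q_X\circ X(f)\circ\mathsf{prj}_2$ for all cones $\rho$ of $D$ (apex $\upsilon$) and all $f:\upsilon\to\tau$, with $DX(g)$ induced by $X(g)$. An object $\sigma$ is irreducible for $(\Omega,D,X)$ if for all $f:\upsilon\to\sigma$ and all cones $\rho$ of $D$ with apex $\upsilon$, $X(f)\circ\mathsf{prj}_1=X(f)\circ\mathsf{prj}_2$. $(\Omega,D,X)$ is a recombination scheme if every codomain $\theta(i)$ of a leg of a cone of $D$ is irreducible for $(\Omega,D,X)$. Sequence alignment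 over $\mathbf{2}E_b^{\varepsilon}$: a triple $(\iota,T,\sigma)$ with $\iota:B\hookrightarrow\mathbf{Seg}(\Omega)$ the inclusion of a subcategory, $T:B\to\mathbf{Set}$ a functor and $\sigma:T\Rightarrow\mathbf{2}E_b^{\varepsilon}\circ\iota$ a natural monomorphism. $\mathsf{Lan}_\iota T$ is the left Kan extension of $T$ along $\iota$ and $\sigma^*:\mathsf{Lan}_\iota T\Rightarrow\mathbf{2}E_b^{\varepsilon}$ is the transpose of $\sigma$ under the adjunction $\mathsf{Lan}_\iota\dashv(-\circ\iota)$. $\mathsf{fml}:F\mathbf{2}E_b^{\varepsilon}\Rightarrow FE_b^{\varepsilon}$ has component at $\tau$ the unique $\mathbf{Icm}$-morphism sending each singleton $\{(u,v)\}$ to $\{u,v\}$. Set $\mathsf{rec}=q_{FE_b^{\varepsilon}}\circ\mathsf{fml}\circ F\sigma^*:F\mathsf{Lan}_\iota T\Rightarrow DFE_b^{\varepsilon}$, let $y_1,y_2$ be the pullback of $\mathsf{rec}$ along itself in $[\mathbf{Seg}(\Omega),\mathbf{Icm}]$, and let $r:F\mathsf{Lan}_\iota T\Rightarrow D_ET$ be the coequalizer of $(y_1,y_2)$ (computed objectwise). $\mathcal{W}^{\mathrm{mon}}$-pedigrad for $(\Omega,D)$: a functor $P:\mathbf{Seg}(\Omega)\to\mathbf{Icm}$ such that for every cone of $D$ with legs $\rho_i:\tau\to\theta(i)$, $i\in[k]$, the induced map $P(\tau)\to\prod_{i\in[k]}P(\theta(i))$ is a monomorphism in $\mathbf{Icm}$.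 *)

theory Defs
  imports Main "HOL-Library.FuncSet"
begin

section \<open>Segments and the category Seg(Omega)\<close>

text \<open>[n] = {1..n} is encoded 0-based as {0..<n}.  A segment (t,c) with
  t : [n1] -> [n0], c : [n0] -> Omega is encoded by the lists
  t = [t(1),...,t(n1)] (values shifted by -1) and c = [c(1),...,c(n0)].\<close>

type_synonym 'o seg = "nat list \<times> 'o list"
type_synonym 'o smor = "'o seg \<times> 'o seg \<times> nat list \<times> nat list"

definition is_seg :: "'o seg \<Rightarrow> bool" where
  "is_seg s \<longleftrightarrow> sorted (fst s) \<and> set (fst s) = {0..<length (snd s)}"

definition msrc :: "'o smor \<Rightarrow> 'o seg" where "msrc m = fst m"
definition mtgt :: "'o smor \<Rightarrow> 'o seg" where "mtgt m = fst (snd m)"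
definition mf1 :: "'o smor \<Rightarrow> nat list" where "mf1 m = fst (snd (snd m))"
definition mf0 :: "'o smor \<Rightarrow> nat list" where "mf0 m = snd (snd (snd m))"

definition is_mor :: "('o::preorder) smor \<Rightarrow> bool" where
  "is_mor m \<longleftrightarrow> (case m of (s, s', f1, f0) \<Rightarrow>
     is_seg s \<and> is_seg s' \<and>
     length f1 = length (fst s) \<and> length f0 = length (snd s) \<and>
     sorted_wrt (<) f1 \<and> set f1 \<subseteq> {0..<length (fst s')} \<and>
     sorted f0 \<and> set f0 \<subseteq> {0..<length (snd s')} \<and>
     (\<forall>i<length f1. fst s' ! (f1 ! i) = f0 ! (fst s ! i)) \<and>
     (\<forall>i<length f0. snd s' ! (f0 ! i) \<le> snd s ! i))"

definition mcomp :: "'o smor \<Rightarrow> 'o smor \<Rightarrow> 'o smor" where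
  "mcomp g f = (msrc f, mtgt g, map (\<lambda>i. mf1 g ! i) (mf1 f), map (\<lambda>i. mf0 g ! i) (mf0 f))"

definition mid :: "'o seg \<Rightarrow> 'o smor" where
  "mid s = (s, s, [0..<length (fst s)], [0..<length (snd s)])"

definition Tr :: "('o::preorder) \<Rightarrow> 'o seg \<Rightarrow> nat set" where
  "Tr b s = {i. i < length (fst s) \<and> b \<le> snd s ! (fst s ! i)}"

definition Env :: "('o::preorder) \<Rightarrow> 'o seg \<Rightarrow> (nat \<Rightarrow> 'e) set" where
  "Env b s = (Tr b s \<rightarrow>\<^sub>E (UNIV :: 'e set))"

definition env_map :: "('o::preorder) \<Rightarrow> 'e \<Rightarrow> 'o smor \<Rightarrow> (nat \<Rightarrow> 'e) \<Rightarrow> (nat \<Rightarrow> 'e)" where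
  "env_map b \<epsilon> m u = (\<lambda>j. if j \<in> Tr b (mtgt m) then
       (if \<exists>i\<in>Tr b (msrc m). mf1 m ! i = j
        then u (SOME i. i \<in> Tr b (msrc m) \<and> mf1 m ! i = j) else \<epsilon>)
     else undefined)"

definition twoE_map :: "('o::preorder) \<Rightarrow> 'e \<Rightarrow> 'o smor \<Rightarrow>
    (nat \<Rightarrow> 'e) \<times> (nat \<Rightarrow> 'e) \<Rightarrow> (nat \<Rightarrow> 'e) \<times> (nat \<Rightarrow> 'e)" where
  "twoE_map b \<epsilon> m p = (env_map b \<epsilon> m (fst p), env_map b \<epsilon> m (snd p))"

section \<open>Free ic-monoids (finite subsets under union)\<close>

definition FinPow :: "'a set \<Rightarrow> 'a set set" where
  "FinPow S = {A. finite A \<and> A \<subseteq> S}"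

definition FE_ob :: "('o::preorder) \<Rightarrow> 'o seg \<Rightarrow> (nat \<Rightarrow> 'e) set set" where
  "FE_ob b s = FinPow (Env b s)"

definition FE_map :: "('o::preorder) \<Rightarrow> 'e \<Rightarrow> 'o smor \<Rightarrow> (nat \<Rightarrow> 'e) set \<Rightarrow> (nat \<Rightarrow> 'e) set" where
  "FE_map b \<epsilon> m A = env_map b \<epsilon> m ` A"

inductive_set ucong :: "'a set set \<Rightarrow> ('a set \<times> 'a set) set \<Rightarrow> ('a set \<times> 'a set) set"
  for S R where
  gen: "(x, y) \<in> R \<Longrightarrow> x \<in> S \<Longrightarrow> y \<in> S \<Longrightarrow> (x, y) \<in> ucong S R"
| refl: "x \<in> S \<Longrightarrow> (x, x) \<in> ucong S R"
| sym: "(x, y) \<in> ucong S R \<Longrightarrow> (y, x) \<in> ucong S R"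
| trans: "(x, y) \<in> ucong S R \<Longrightarrow> (y, z) \<in> ucong S R \<Longrightarrow> (x, z) \<in> ucong S R"
| union: "(x, y) \<in> ucong S R \<Longrightarrow> (x', y') \<in> ucong S R \<Longrightarrow> (x \<union> x', y \<union> y') \<in> ucong S R"

type_synonym 'o cone = "'o seg \<times> 'o smor list"  \<comment> \<open>(apex, legs)\<close>

definition cone_in :: "nat \<Rightarrow> ('o::preorder) cone \<Rightarrow> bool" where
  "cone_in n \<rho> \<longleftrightarrow> is_seg (fst \<rho>) \<and> length (fst (fst \<rho>)) = n \<and>
     (\<forall>l\<in>set (snd \<rho>). is_mor l \<and> msrc l = fst \<rho> \<and>
        length (fst (mtgt l)) = n \<and> mf1 l = [0..<n])"

definition recomb_chromology :: "(nat \<Rightarrow> ('o::preorder) cone set) \<Rightarrow> bool" where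
  "recomb_chromology D \<longleftrightarrow> (\<forall>n. finite (D n) \<and> (\<forall>\<rho>\<in>D n. cone_in n \<rho>))"

definition kpair :: "('o seg \<Rightarrow> 'a set) \<Rightarrow> ('o smor \<Rightarrow> 'a \<Rightarrow> 'a) \<Rightarrow> 'o cone \<Rightarrow> ('a \<times> 'a) set" where
  "kpair Xob Xmap \<rho> = {(a, a'). a \<in> Xob (fst \<rho>) \<and> a' \<in> Xob (fst \<rho>) \<and>
      (\<forall>l\<in>set (snd \<rho>). Xmap l a = Xmap l a')}"

definition irreducible :: "(nat \<Rightarrow> ('o::preorder) cone set) \<Rightarrow> ('o seg \<Rightarrow> 'a set) \<Rightarrow>
    ('o smor \<Rightarrow> 'a \<Rightarrow> 'a) \<Rightarrow> 'o seg \<Rightarrow> bool" where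
  "irreducible D Xob Xmap s \<longleftrightarrow> (\<forall>n \<rho> f. \<rho> \<in> D n \<longrightarrow> is_mor f \<longrightarrow> msrc f = fst \<rho> \<longrightarrow>
      mtgt f = s \<longrightarrow> (\<forall>(a, a')\<in>kpair Xob Xmap \<rho>. Xmap f a = Xmap f a'))"

definition recomb_scheme :: "(nat \<Rightarrow> ('o::preorder) cone set) \<Rightarrow> ('o seg \<Rightarrow> 'a set) \<Rightarrow>
    ('o smor \<Rightarrow> 'a \<Rightarrow> 'a) \<Rightarrow> bool" where
  "recomb_scheme D Xob Xmap \<longleftrightarrow>
     (\<forall>n. \<forall>\<rho>\<in>D n. \<forall>l\<in>set (snd \<rho>). irreducible D Xob Xmap (mtgt l))"

definition D_rel :: "(nat \<Rightarrow> ('o::preorder) cone set) \<Rightarrow> ('o seg \<Rightarrow> 'a set set) \<Rightarrow>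
    ('o smor \<Rightarrow> 'a set \<Rightarrow> 'a set) \<Rightarrow> 'o seg \<Rightarrow> ('a set \<times> 'a set) set" where
  "D_rel D Xob Xmap t = {(Xmap f a, Xmap f a') | n \<rho> f a a'. \<rho> \<in> D n \<and> is_mor f \<and>
      msrc f = fst \<rho> \<and> mtgt f = t \<and> (a, a') \<in> kpair Xob Xmap \<rho>}"

definition D_cong :: "(nat \<Rightarrow> ('o::preorder) cone set) \<Rightarrow> ('o seg \<Rightarrow> 'a set set) \<Rightarrow>
    ('o smor \<Rightarrow> 'a set \<Rightarrow> 'a set) \<Rightarrow> 'o seg \<Rightarrow> ('a set \<times> 'a set) set" where
  "D_cong D Xob Xmap t = ucong (Xob t) (D_rel D Xob Xmap t)"

definition qD :: "(nat \<Rightarrow> ('o::preorder) cone set) \<Rightarrow> ('o seg \<Rightarrow> 'a set set) \<Rightarrow>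
    ('o smor \<Rightarrow> 'a set \<Rightarrow> 'a set) \<Rightarrow> 'o seg \<Rightarrow> 'a set \<Rightarrow> 'a set set" where
  "qD D Xob Xmap t a = D_cong D Xob Xmap t `` {a}"

definition is_subcat :: "('o::preorder) seg set \<Rightarrow> 'o smor set \<Rightarrow> bool" where
  "is_subcat Bob Bmor \<longleftrightarrow>
     (\<forall>\<beta>\<in>Bob. is_seg \<beta> \<and> mid \<beta> \<in> Bmor) \<and>
     (\<forall>m\<in>Bmor. is_mor m \<and> msrc m \<in> Bob \<and> mtgt m \<in> Bob) \<and>
     (\<forall>f\<in>Bmor. \<forall>g\<in>Bmor. mtgt f = msrc g \<longrightarrow> mcomp g f \<in> Bmor)"

definition is_functor_on :: "'o seg set \<Rightarrow> 'o smor set \<Rightarrow> ('o seg \<Rightarrow> 'x set) \<Rightarrow>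
    ('o smor \<Rightarrow> 'x \<Rightarrow> 'x) \<Rightarrow> bool" where
  "is_functor_on Bob Bmor Tob Tmap \<longleftrightarrow>
     (\<forall>m\<in>Bmor. Tmap m \<in> Tob (msrc m) \<rightarrow> Tob (mtgt m)) \<and>
     (\<forall>\<beta>\<in>Bob. \<forall>x\<in>Tob \<beta>. Tmap (mid \<beta>) x = x) \<and>
     (\<forall>f\<in>Bmor. \<forall>g\<in>Bmor. mtgt f = msrc g \<longrightarrow>
        (\<forall>x\<in>Tob (msrc f). Tmap (mcomp g f) x = Tmap g (Tmap f x)))"

definition seq_alignment :: "('o::preorder) \<Rightarrow> 'e \<Rightarrow> 'o seg set \<Rightarrow> 'o smor set \<Rightarrow>
    ('o seg \<Rightarrow> 'x set) \<Rightarrow> ('o smor \<Rightarrow> 'x \<Rightarrow> 'x) \<Rightarrow>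
    ('o seg \<Rightarrow> 'x \<Rightarrow> (nat \<Rightarrow> 'e) \<times> (nat \<Rightarrow> 'e)) \<Rightarrow> bool" where
  "seq_alignment b \<epsilon> Bob Bmor Tob Tmap \<sigma> \<longleftrightarrow>
     is_subcat Bob Bmor \<and> is_functor_on Bob Bmor Tob Tmap \<and>
     (\<forall>\<beta>\<in>Bob. \<sigma> \<beta> \<in> Tob \<beta> \<rightarrow> Env b \<beta> \<times> Env b \<beta> \<and> inj_on (\<sigma> \<beta>) (Tob \<beta>)) \<and>
     (\<forall>m\<in>Bmor. \<forall>x\<in>Tob (msrc m). \<sigma> (mtgt m) (Tmap m x) = twoE_map b \<epsilon> m (\<sigma> (msrc m) x))"

section \<open>Left Kan extension (pointwise colimit formula)\<close>

definition lan_elems :: "('o::preorder) seg set \<Rightarrow> ('o seg \<Rightarrow> 'x set) \<Rightarrow> 'o seg \<Rightarrow>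
    ('o seg \<times> 'o smor \<times> 'x) set" where
  "lan_elems Bob Tob t = {(\<beta>, g, x). \<beta> \<in> Bob \<and> is_mor g \<and> msrc g = \<beta> \<and> mtgt g = t \<and> x \<in> Tob \<beta>}"

inductive_set lan_rel :: "('o::preorder) seg set \<Rightarrow> 'o smor set \<Rightarrow> ('o seg \<Rightarrow> 'x set) \<Rightarrow>
    ('o smor \<Rightarrow> 'x \<Rightarrow> 'x) \<Rightarrow> 'o seg \<Rightarrow>
    (('o seg \<times> 'o smor \<times> 'x) \<times> ('o seg \<times> 'o smor \<times> 'x)) set"
  for Bob Bmor Tob Tmap t where
  gen: "h \<in> Bmor \<Longrightarrow> is_mor g \<Longrightarrow> msrc g = mtgt h \<Longrightarrow> mtgt g = t \<Longrightarrow> x \<in> Tob (msrc h) \<Longrightarrow>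
        ((msrc h, mcomp g h, x), (mtgt h, g, Tmap h x)) \<in> lan_rel Bob Bmor Tob Tmap t"
| refl: "p \<in> lan_elems Bob Tob t \<Longrightarrow> (p, p) \<in> lan_rel Bob Bmor Tob Tmap t"
| sym: "(p, p') \<in> lan_rel Bob Bmor Tob Tmap t \<Longrightarrow> (p', p) \<in> lan_rel Bob Bmor Tob Tmap t"
| trans: "(p, p') \<in> lan_rel Bob Bmor Tob Tmap t \<Longrightarrow> (p', p'') \<in> lan_rel Bob Bmor Tob Tmap t \<Longrightarrow>
          (p, p'') \<in> lan_rel Bob Bmor Tob Tmap t"

definition lan_ob where
  "lan_ob Bob Bmor Tob Tmap t = lan_elems Bob Tob t // lan_rel Bob Bmor Tob Tmap t"

definition lan_map where
  "lan_map Bob Bmor Tob Tmap m C =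
     lan_rel Bob Bmor Tob Tmap (mtgt m) `` ((\<lambda>(\<beta>, g, x). (\<beta>, mcomp m g, x)) ` C)"

text \<open>The transpose sigma* : Lan T => 2E of sigma.\<close>
definition lan_sigma :: "('o::preorder) \<Rightarrow> 'e \<Rightarrow> ('o seg \<Rightarrow> 'x \<Rightarrow> (nat \<Rightarrow> 'e) \<times> (nat \<Rightarrow> 'e)) \<Rightarrow>
    ('o seg \<times> 'o smor \<times> 'x) set \<Rightarrow> (nat \<Rightarrow> 'e) \<times> (nat \<Rightarrow> 'e)" where
  "lan_sigma b \<epsilon> \<sigma> C = (case (SOME p. p \<in> C) of (\<beta>, g, x) \<Rightarrow> twoE_map b \<epsilon> g (\<sigma> \<beta> x))"

definition FLan_ob where
  "FLan_ob Bob Bmor Tob Tmap t = FinPow (lan_ob Bob Bmor Tob Tmap t)"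

definition FLan_map where
  "FLan_map Bob Bmor Tob Tmap m A = lan_map Bob Bmor Tob Tmap m ` A"

section \<open>The functor D_E T\<close>

definition fml :: "('a \<times> 'a) set \<Rightarrow> 'a set" where
  "fml A = (\<Union>(u, v)\<in>A. {u, v})"

definition recmap :: "(nat \<Rightarrow> ('o::preorder) cone set) \<Rightarrow> 'o \<Rightarrow> 'e \<Rightarrow>
    ('o seg \<Rightarrow> 'x \<Rightarrow> (nat \<Rightarrow> 'e) \<times> (nat \<Rightarrow> 'e)) \<Rightarrow> 'o seg \<Rightarrow>
    ('o seg \<times> 'o smor \<times> 'x) set set \<Rightarrow> (nat \<Rightarrow> 'e) set set" where
  "recmap D b \<epsilon> \<sigma> t A = qD D (FE_ob b) (FE_map b \<epsilon>) t (fml (lan_sigma b \<epsilon> \<sigma> ` A))"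

text \<open>Pullback of rec along itself (objectwise); y1 = fst, y2 = snd.\<close>
definition rec_pb where
  "rec_pb D b \<epsilon> Bob Bmor Tob Tmap \<sigma> t =
     {(A, A'). A \<in> FLan_ob Bob Bmor Tob Tmap t \<and> A' \<in> FLan_ob Bob Bmor Tob Tmap t \<and>
        recmap D b \<epsilon> \<sigma> t A = recmap D b \<epsilon> \<sigma> t A'}"

text \<open>Coequalizer of (y1, y2) in Icm: quotient by the congruence generated by the pairs (y1 p, y2 p).\<close>
definition DET_cong where
  "DET_cong D b \<epsilon> Bob Bmor Tob Tmap \<sigma> t =
     ucong (FLan_ob Bob Bmor Tob Tmap t) ((\<lambda>p. (fst p, snd p)) ` rec_pb D b \<epsilon> Bob Bmor Tob Tmap \<sigma> t)"

definition DET_ob where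
  "DET_ob D b \<epsilon> Bob Bmor Tob Tmap \<sigma> t =
     FLan_ob Bob Bmor Tob Tmap t // DET_cong D b \<epsilon> Bob Bmor Tob Tmap \<sigma> t"

definition DET_map where
  "DET_map D b \<epsilon> Bob Bmor Tob Tmap \<sigma> m K =
     DET_cong D b \<epsilon> Bob Bmor Tob Tmap \<sigma> (mtgt m) `` (FLan_map Bob Bmor Tob Tmap m ` K)"

text \<open>Monomorphisms in Icm are the injective homomorphisms.\<close>
definition mon_pedigrad :: "(nat \<Rightarrow> ('o::preorder) cone set) \<Rightarrow> ('o seg \<Rightarrow> 'p set) \<Rightarrow>
    ('o smor \<Rightarrow> 'p \<Rightarrow> 'p) \<Rightarrow> bool" where
  "mon_pedigrad D Pob Pmap \<longleftrightarrow>
     (\<forall>n. \<forall>\<rho>\<in>D n. inj_on (\<lambda>K. map (\<lambda>l. Pmap l K) (snd \<rho>)) (Pob (fst \<rho>)))"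

end

theory Submission
  imports Defs
begin

(*
  For a finite set A of elements of Lan T(tau) let v(A) = fml_sigma A, the set of environments
  occurring in the pairs sigma*(C), C in A; then rec(A) is the class of v(A) modulo the
  recombination congruence. Since v preserves unions, the kernel pair of rec is already a
  congruence, so A and A' have the same class in D_E T(tau) iff v(A) and v(A') are congruent
  modulo D. This relation is natural in tau, so D_E T(l) sends the class of A to the class of
  Lan T(l) A, and at the irreducible codomain of a leg l congruence modulo D is equality.
  Hence if the classes of A and A' agree under every leg l of a cone rho, then
  FE(l) v(A) = FE(l) v(A') for all legs, i.e. (v(A), v(A')) lies in the kernel pair G(FE, rho);
  such pairs are identified by D at the apex (take f = id), so A and A' have the same class.
*)

section \<open>Morphisms of segments\<close>

lemma msrc_conv [simp]: "msrc (s, s', f1, f0) = s" by (simp add: msrc_def)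
lemma mtgt_conv [simp]: "mtgt (s, s', f1, f0) = s'" by (simp add: mtgt_def)
lemma mf1_conv [simp]: "mf1 (s, s', f1, f0) = f1" by (simp add: mf1_def)
lemma mf0_conv [simp]: "mf0 (s, s', f1, f0) = f0" by (simp add: mf0_def)

lemma msrc_mcomp [simp]: "msrc (mcomp g f) = msrc f" by (simp add: mcomp_def)
lemma mtgt_mcomp [simp]: "mtgt (mcomp g f) = mtgt g" by (simp add: mcomp_def)
lemma mf1_mcomp [simp]: "mf1 (mcomp g f) = map ((!) (mf1 g)) (mf1 f)" by (simp add: mcomp_def)
lemma mf0_mcomp [simp]: "mf0 (mcomp g f) = map ((!) (mf0 g)) (mf0 f)" by (simp add: mcomp_def)

lemma msrc_mid [simp]: "msrc (mid s) = s" by (simp add: mid_def)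
lemma mtgt_mid [simp]: "mtgt (mid s) = s" by (simp add: mid_def)
lemma mf1_mid [simp]: "mf1 (mid s) = [0..<length (fst s)]" by (simp add: mid_def)
lemma mf0_mid [simp]: "mf0 (mid s) = [0..<length (snd s)]" by (simp add: mid_def)

lemma smor_eqI:
  "msrc m = msrc m' \<Longrightarrow> mtgt m = mtgt m' \<Longrightarrow> mf1 m = mf1 m' \<Longrightarrow> mf0 m = mf0 m' \<Longrightarrow> m = m'"
  by (cases m, cases m') simp

lemma is_mor_iff:
  "is_mor m \<longleftrightarrow> is_seg (msrc m) \<and> is_seg (mtgt m) \<and>
     length (mf1 m) = length (fst (msrc m)) \<and> length (mf0 m) = length (snd (msrc m)) \<and>
     sorted_wrt (<) (mf1 m) \<and> set (mf1 m) \<subseteq> {0..<length (fst (mtgt m))} \<and>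
     sorted (mf0 m) \<and> set (mf0 m) \<subseteq> {0..<length (snd (mtgt m))} \<and>
     (\<forall>i<length (mf1 m). fst (mtgt m) ! (mf1 m ! i) = mf0 m ! (fst (msrc m) ! i)) \<and>
     (\<forall>i<length (mf0 m). snd (mtgt m) ! (mf0 m ! i) \<le> snd (msrc m) ! i)"
  by (cases m) (simp add: is_mor_def)

lemma is_seg_nth_less: "is_seg s \<Longrightarrow> i < length (fst s) \<Longrightarrow> fst s ! i < length (snd s)"
  unfolding is_seg_def by (metis atLeastLessThan_iff nth_mem)

lemma sorted_wrt_map_nth:
  assumes "sorted_wrt P xs" and "set xs \<subseteq> {..<length ys}"
    and "\<And>i j. i < length ys \<Longrightarrow> j < length ys \<Longrightarrow> P i j \<Longrightarrow> Q (ys ! i) (ys ! j)"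
  shows "sorted_wrt Q (map ((!) ys) xs)"
  unfolding sorted_wrt_map using assms(1) by (rule sorted_wrt_mono_rel[rotated]) (use assms in auto)

lemma is_mor_mcomp:
  assumes g: "is_mor g" and h: "is_mor h" and gh: "mtgt h = msrc g"
  shows "is_mor (mcomp g h)"
proof -
  note G = g[unfolded is_mor_iff] and H = h[unfolded is_mor_iff]
  have h1: "set (mf1 h) \<subseteq> {..<length (mf1 g)}" and h0: "set (mf0 h) \<subseteq> {..<length (mf0 g)}"
    using G H gh by auto
  have "sorted_wrt (<) (map ((!) (mf1 g)) (mf1 h))"
    using G H h1 by (intro sorted_wrt_map_nth[where P = "(<)"]) (auto intro: sorted_wrt_nth_less)
  moreover have "sorted (map ((!) (mf0 g)) (mf0 h))"
    using G H h0 by (intro sorted_wrt_map_nth[where P = "(\<le>)"]) (auto intro: sorted_nth_mono)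
  moreover have "fst (mtgt g) ! (mf1 g ! (mf1 h ! i)) = mf0 g ! (mf0 h ! (fst (msrc h) ! i))"
    if i: "i < length (mf1 h)" for i
  proof -
    have "mf1 h ! i < length (mf1 g)" using h1 nth_mem[OF i] by blast
    then show ?thesis using G H gh i by auto
  qed
  moreover have "snd (mtgt g) ! (mf0 g ! (mf0 h ! i)) \<le> snd (msrc h) ! i"
    if i: "i < length (mf0 h)" for i
  proof -
    have "mf0 h ! i < length (mf0 g)" using h0 nth_mem[OF i] by blast
    then have "snd (mtgt g) ! (mf0 g ! (mf0 h ! i)) \<le> snd (msrc g) ! (mf0 h ! i)" using G by blast
    also have "\<dots> \<le> snd (msrc h) ! i" using H gh i by auto
    finally show ?thesis .
  qed
  moreover have "set (map ((!) (mf1 g)) (mf1 h)) \<subseteq> set (mf1 g)"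
    and "set (map ((!) (mf0 g)) (mf0 h)) \<subseteq> set (mf0 g)"
    using h1 h0 by auto
  ultimately show ?thesis
    using G H h0 h1 is_seg_nth_less[of "msrc h"] by (auto simp: is_mor_iff)
qed

lemma is_mor_mid: "is_seg s \<Longrightarrow> is_mor (mid s)"
  unfolding is_mor_iff by (auto simp: strict_sorted_iff is_seg_nth_less)

lemma mcomp_assoc:
  assumes "is_mor g" and "is_mor h" and "mtgt h = msrc g"
  shows "mcomp l (mcomp g h) = mcomp (mcomp l g) h"
  using assms by (intro smor_eqI) (auto simp: is_mor_iff)

section \<open>Environment functors\<close>

lemma Tr_less: "i \<in> Tr b s \<Longrightarrow> i < length (fst s)"
  by (simp add: Tr_def)

lemma Tr_pullback:
  assumes m: "is_mor m" and i: "i < length (fst (msrc m))" and j: "mf1 m ! i \<in> Tr b (mtgt m)"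
  shows "i \<in> Tr b (msrc m)"
proof -
  note M = m[unfolded is_mor_iff]
  have k: "fst (msrc m) ! i < length (mf0 m)" using M is_seg_nth_less[of "msrc m" i] i by simp
  have "b \<le> snd (mtgt m) ! (fst (mtgt m) ! (mf1 m ! i))" using j by (simp add: Tr_def)
  also have "fst (mtgt m) ! (mf1 m ! i) = mf0 m ! (fst (msrc m) ! i)" using M i by auto
  also have "snd (mtgt m) ! (mf0 m ! (fst (msrc m) ! i)) \<le> snd (msrc m) ! (fst (msrc m) ! i)"
    using M k by blast
  finally show ?thesis using i by (simp add: Tr_def)
qed

lemma env_map_nth_mf1:
  assumes m: "is_mor m" and i: "i \<in> Tr b (msrc m)" and j: "mf1 m ! i \<in> Tr b (mtgt m)"
  shows "env_map b \<epsilon> m u (mf1 m ! i) = u i"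
proof -
  have "distinct (mf1 m)" and "\<forall>i' \<in> Tr b (msrc m). i' < length (mf1 m)"
    using m by (auto simp: is_mor_iff strict_sorted_iff dest: Tr_less)
  then have "inj_on ((!) (mf1 m)) (Tr b (msrc m))" by (rule inj_on_nth)
  then have "(SOME i'. i' \<in> Tr b (msrc m) \<and> mf1 m ! i' = mf1 m ! i) = i"
    using i by (auto dest: inj_onD)
  then show ?thesis using i j unfolding env_map_def by auto
qed

lemma env_map_not_in_image:
  "j \<in> Tr b (mtgt m) \<Longrightarrow> j \<notin> (!) (mf1 m) ` Tr b (msrc m) \<Longrightarrow> env_map b \<epsilon> m u j = \<epsilon>"
  unfolding env_map_def by auto

lemma env_map_not_in_Tr: "j \<notin> Tr b (mtgt m) \<Longrightarrow> env_map b \<epsilon> m u j = undefined"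
  unfolding env_map_def by simp

lemma env_map_mcomp:
  assumes g: "is_mor g" and h: "is_mor h" and gh: "mtgt h = msrc g"
  shows "env_map b \<epsilon> (mcomp g h) u = env_map b \<epsilon> g (env_map b \<epsilon> h u)"
proof
  fix j
  have gh_mor: "is_mor (mcomp g h)" using is_mor_mcomp[OF g h gh] .
  have Tr_h: "i < length (mf1 h)" if "i \<in> Tr b (msrc h)" for i
    using h that by (auto simp: is_mor_iff dest: Tr_less)
  show "env_map b \<epsilon> (mcomp g h) u j = env_map b \<epsilon> g (env_map b \<epsilon> h u) j"
  proof (cases "j \<in> Tr b (mtgt g)")
    case False
    then show ?thesis by (simp add: env_map_not_in_Tr)
  next
    case j: True
    show ?thesis
    proof (cases "\<exists>i\<in>Tr b (msrc h). mf1 g ! (mf1 h ! i) = j")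
      case True
      then obtain i where i: "i \<in> Tr b (msrc h)" and ij: "mf1 g ! (mf1 h ! i) = j" by blast
      have "mf1 h ! i < length (fst (msrc g))"
        using h gh nth_mem[OF Tr_h[OF i]] by (auto simp: is_mor_iff)
      then have k: "mf1 h ! i \<in> Tr b (msrc g)" using Tr_pullback[OF g] j ij by simp
      have "env_map b \<epsilon> (mcomp g h) u j = u i"
        using env_map_nth_mf1[OF gh_mor, of i] i j ij Tr_h[OF i] by simp
      moreover have "env_map b \<epsilon> g (env_map b \<epsilon> h u) j = env_map b \<epsilon> h u (mf1 h ! i)"
        using env_map_nth_mf1[OF g k] j ij by simp
      moreover have "env_map b \<epsilon> h u (mf1 h ! i) = u i"
        using env_map_nth_mf1[OF h i] k gh by simp
      ultimately show ?thesis by simp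
    next
      case False
      then have "j \<notin> (!) (mf1 (mcomp g h)) ` Tr b (msrc h)"
        using Tr_h by auto
      then have "env_map b \<epsilon> (mcomp g h) u j = \<epsilon>"
        using j by (intro env_map_not_in_image) simp_all
      moreover have "env_map b \<epsilon> g (env_map b \<epsilon> h u) j = \<epsilon>"
      proof (cases "j \<in> (!) (mf1 g) ` Tr b (msrc g)")
        case True
        then obtain k where k: "k \<in> Tr b (msrc g)" and kj: "j = mf1 g ! k" by blast
        then have "env_map b \<epsilon> g (env_map b \<epsilon> h u) j = env_map b \<epsilon> h u k"
          using env_map_nth_mf1[OF g k] j by simp
        also have "\<dots> = \<epsilon>" using k gh False kj by (intro env_map_not_in_image) auto
        finally show ?thesis .
      qed (use j in \<open>simp add: env_map_not_in_image\<close>)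
      ultimately show ?thesis by simp
    qed
  qed
qed

lemma env_map_in_Env: "env_map b \<epsilon> m u \<in> Env b (mtgt m)"
  unfolding Env_def by (rule PiE_I) (simp_all add: env_map_not_in_Tr)

lemma env_map_mid:
  assumes s: "is_seg s" and u: "u \<in> Env b s"
  shows "env_map b \<epsilon> (mid s) u = u"
proof
  fix j
  show "env_map b \<epsilon> (mid s) u j = u j"
  proof (cases "j \<in> Tr b s")
    case True
    then have j: "mf1 (mid s) ! j = j" by (simp add: Tr_less)
    have "env_map b \<epsilon> (mid s) u (mf1 (mid s) ! j) = u j"
      by (rule env_map_nth_mf1) (use is_mor_mid[OF s] True j in simp_all)
    then show ?thesis unfolding j .
  next
    case False
    then have "u j = undefined" using u unfolding Env_def by (rule PiE_arb[rotated])
    then show ?thesis using False by (simp add: env_map_not_in_Tr)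
  qed
qed

lemma twoE_map_mcomp:
  "is_mor g \<Longrightarrow> is_mor h \<Longrightarrow> mtgt h = msrc g \<Longrightarrow>
    twoE_map b \<epsilon> (mcomp g h) p = twoE_map b \<epsilon> g (twoE_map b \<epsilon> h p)"
  by (simp add: twoE_map_def env_map_mcomp)

lemma FE_map_mcomp:
  "is_mor g \<Longrightarrow> is_mor h \<Longrightarrow> mtgt h = msrc g \<Longrightarrow>
    FE_map b \<epsilon> (mcomp g h) a = FE_map b \<epsilon> g (FE_map b \<epsilon> h a)"
  by (simp add: FE_map_def env_map_mcomp image_image)

lemma FE_map_mid:
  assumes s: "is_seg s" and a: "a \<in> FE_ob b s"
  shows "FE_map b \<epsilon> (mid s) a = a"
proof -
  have "env_map b \<epsilon> (mid s) u = u" if "u \<in> a" for u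
  proof -
    have "u \<in> Env b s" using a that by (auto simp: FE_ob_def FinPow_def)
    then show ?thesis by (rule env_map_mid[OF s])
  qed
  then show ?thesis unfolding FE_map_def by simp
qed

lemma FE_map_Un: "FE_map b \<epsilon> l (a \<union> a') = FE_map b \<epsilon> l a \<union> FE_map b \<epsilon> l a'"
  unfolding FE_map_def by (rule image_Un)

lemma FE_map_in_FE_ob: "finite a \<Longrightarrow> FE_map b \<epsilon> l a \<in> FE_ob b (mtgt l)"
  unfolding FE_map_def FE_ob_def FinPow_def using env_map_in_Env[of b \<epsilon> l] by auto

section \<open>Union congruences and the recombination congruence\<close>

lemma FinPow_Un: "x \<in> FinPow S \<Longrightarrow> y \<in> FinPow S \<Longrightarrow> x \<union> y \<in> FinPow S"
  unfolding FinPow_def by auto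

lemma ucong_subset:
  assumes "\<And>x y. x \<in> S \<Longrightarrow> y \<in> S \<Longrightarrow> x \<union> y \<in> S"
  shows "ucong S R \<subseteq> S \<times> S"
proof (rule subrelI)
  fix x y assume "(x, y) \<in> ucong S R"
  then show "(x, y) \<in> S \<times> S" by (induction rule: ucong.induct) (auto intro: assms)
qed

lemma equiv_ucong:
  assumes "\<And>x y. x \<in> S \<Longrightarrow> y \<in> S \<Longrightarrow> x \<union> y \<in> S"
  shows "equiv S (ucong S R)"
  using ucong_subset[OF assms]
  by (intro equivI refl_onI symI transI) (auto intro: ucong.refl ucong.sym ucong.trans)

lemma ucong_eq_self:
  assumes R: "equiv S R"
    and union: "\<And>x y x' y'. (x, y) \<in> R \<Longrightarrow> (x', y') \<in> R \<Longrightarrow> (x \<union> x', y \<union> y') \<in> R"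
  shows "ucong S R = R"
proof (intro subset_antisym subrelI)
  fix x y assume "(x, y) \<in> ucong S R"
  then show "(x, y) \<in> R"
    by (induction rule: ucong.induct)
      (use R in \<open>auto simp: equiv_def refl_on_def dest: symD transD intro: union\<close>)
next
  fix x y assume "(x, y) \<in> R"
  then show "(x, y) \<in> ucong S R" using R by (auto simp: equiv_def intro: ucong.gen)
qed

lemma equiv_D_cong_FE: "equiv (FE_ob b t) (D_cong D (FE_ob b) (FE_map b \<epsilon>) t)"
  unfolding D_cong_def FE_ob_def by (rule equiv_ucong) (rule FinPow_Un)

lemma D_cong_irreducible_eq:
  assumes "irreducible D Xob Xmap \<theta>" and "(a, a') \<in> D_cong D Xob Xmap \<theta>"
  shows "a = a'"
  using assms(2) unfolding D_cong_def
proof (induction rule: ucong.induct)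
  case (gen x y)
  then show ?case using assms(1) unfolding D_rel_def irreducible_def by fast
qed auto

lemma D_cong_FE_map:
  assumes l: "is_mor l" "msrc l = t" and "(a, a') \<in> D_cong D (FE_ob b) (FE_map b \<epsilon>) t"
  shows "(FE_map b \<epsilon> l a, FE_map b \<epsilon> l a') \<in> D_cong D (FE_ob b) (FE_map b \<epsilon>) (mtgt l)"
  using assms(3) unfolding D_cong_def
proof (induction rule: ucong.induct)
  case (gen x y)
  then obtain n \<rho> f c c' where xy: "x = FE_map b \<epsilon> f c" "y = FE_map b \<epsilon> f c'"
    and f: "\<rho> \<in> D n" "is_mor f" "msrc f = fst \<rho>" "mtgt f = t"
    and c: "(c, c') \<in> kpair (FE_ob b) (FE_map b \<epsilon>) \<rho>"
    unfolding D_rel_def by blast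
  have "(FE_map b \<epsilon> (mcomp l f) c, FE_map b \<epsilon> (mcomp l f) c')
      \<in> D_rel D (FE_ob b) (FE_map b \<epsilon>) (mtgt l)"
    unfolding D_rel_def using f c is_mor_mcomp[OF l(1) f(2)] l(2) by fastforce
  moreover have "finite x" "finite y" using gen.hyps(2,3) by (simp_all add: FE_ob_def FinPow_def)
  then have "FE_map b \<epsilon> l x \<in> FE_ob b (mtgt l)" "FE_map b \<epsilon> l y \<in> FE_ob b (mtgt l)"
    by (simp_all add: FE_map_in_FE_ob)
  ultimately show ?case
    using xy f l by (auto simp: FE_map_mcomp intro: ucong.gen)
next
  case (refl x)
  then have "finite x" by (simp add: FE_ob_def FinPow_def)
  then show ?case by (simp add: FE_map_in_FE_ob ucong.refl)
next
  case (union x y x' y')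
  then show ?case by (simp add: FE_map_Un ucong.union)
qed (auto intro: ucong.sym ucong.trans)

lemma kpair_in_D_cong:
  assumes \<rho>: "\<rho> \<in> D n" and apex: "is_seg (fst \<rho>)"
    and kp: "(a, a') \<in> kpair (FE_ob b) (FE_map b \<epsilon>) \<rho>"
  shows "(a, a') \<in> D_cong D (FE_ob b) (FE_map b \<epsilon>) (fst \<rho>)"
proof -
  have a: "a \<in> FE_ob b (fst \<rho>)" "a' \<in> FE_ob b (fst \<rho>)" using kp by (simp_all add: kpair_def)
  have "(FE_map b \<epsilon> (mid (fst \<rho>)) a, FE_map b \<epsilon> (mid (fst \<rho>)) a')
      \<in> D_rel D (FE_ob b) (FE_map b \<epsilon>) (fst \<rho>)"
    unfolding D_rel_def using \<rho> kp is_mor_mid[OF apex] by fastforce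
  then have "(a, a') \<in> D_rel D (FE_ob b) (FE_map b \<epsilon>) (fst \<rho>)"
    using FE_map_mid[OF apex a(1)] FE_map_mid[OF apex a(2)] by simp
  then show ?thesis unfolding D_cong_def using a by (rule ucong.gen)
qed

section \<open>The left Kan extension\<close>

lemma Image_image_Image_singleton:
  assumes "trans r'" and "(x, x) \<in> r" and "\<And>y z. (y, z) \<in> r \<Longrightarrow> (f y, f z) \<in> r'"
  shows "r' `` (f ` (r `` {x})) = r' `` {f x}"
  using assms by (auto dest: transD)

definition lan_sigma_elem :: "('o::preorder) \<Rightarrow> 'e \<Rightarrow> ('o seg \<Rightarrow> 'x \<Rightarrow> (nat \<Rightarrow> 'e) \<times> (nat \<Rightarrow> 'e)) \<Rightarrow>
    'o seg \<times> 'o smor \<times> 'x \<Rightarrow> (nat \<Rightarrow> 'e) \<times> (nat \<Rightarrow> 'e)" where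
  "lan_sigma_elem b \<epsilon> \<sigma> = (\<lambda>(\<beta>, g, x). twoE_map b \<epsilon> g (\<sigma> \<beta> x))"

lemma fml_eq: "fml A = fst ` A \<union> snd ` A"
  by (force simp: fml_def)

definition fml_sigma :: "('o::preorder) \<Rightarrow> 'e \<Rightarrow> ('o seg \<Rightarrow> 'x \<Rightarrow> (nat \<Rightarrow> 'e) \<times> (nat \<Rightarrow> 'e)) \<Rightarrow>
    ('o seg \<times> 'o smor \<times> 'x) set set \<Rightarrow> (nat \<Rightarrow> 'e) set" where
  "fml_sigma b \<epsilon> \<sigma> A = fml (lan_sigma b \<epsilon> \<sigma> ` A)"

abbreviation lan_push :: "'o smor \<Rightarrow> 'o seg \<times> 'o smor \<times> 'x \<Rightarrow> 'o seg \<times> 'o smor \<times> 'x" where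
  "lan_push l \<equiv> \<lambda>(\<beta>, g, x). (\<beta>, mcomp l g, x)"

context
  fixes b :: "'o::preorder" and \<epsilon> :: 'e and Bob :: "'o seg set" and Bmor :: "'o smor set"
    and Tob :: "'o seg \<Rightarrow> 'x set" and Tmap :: "'o smor \<Rightarrow> 'x \<Rightarrow> 'x"
    and \<sigma> :: "'o seg \<Rightarrow> 'x \<Rightarrow> (nat \<Rightarrow> 'e) \<times> (nat \<Rightarrow> 'e)"
  assumes SA: "seq_alignment b \<epsilon> Bob Bmor Tob Tmap \<sigma>"
begin

lemma Bmor_is_mor: "h \<in> Bmor \<Longrightarrow> is_mor h \<and> msrc h \<in> Bob \<and> mtgt h \<in> Bob"
  using SA unfolding seq_alignment_def is_subcat_def by blast

lemma Tmap_in_Tob: "h \<in> Bmor \<Longrightarrow> x \<in> Tob (msrc h) \<Longrightarrow> Tmap h x \<in> Tob (mtgt h)"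
  using SA unfolding seq_alignment_def is_functor_on_def by blast

lemma sigma_Tmap: "h \<in> Bmor \<Longrightarrow> x \<in> Tob (msrc h) \<Longrightarrow>
    \<sigma> (mtgt h) (Tmap h x) = twoE_map b \<epsilon> h (\<sigma> (msrc h) x)"
  using SA unfolding seq_alignment_def by blast

lemma lan_rel_in_lan_elems:
  "(p, p') \<in> lan_rel Bob Bmor Tob Tmap t \<Longrightarrow> p \<in> lan_elems Bob Tob t \<and> p' \<in> lan_elems Bob Tob t"
proof (induction rule: lan_rel.induct)
  case (gen h g x)
  then show ?case
    using Bmor_is_mor[OF gen(1)] Tmap_in_Tob[OF gen(1)] is_mor_mcomp[OF gen(2)]
    by (simp add: lan_elems_def)
qed auto

lemma lan_sigma_elem_lan_rel:
  "(p, p') \<in> lan_rel Bob Bmor Tob Tmap t \<Longrightarrow> lan_sigma_elem b \<epsilon> \<sigma> p = lan_sigma_elem b \<epsilon> \<sigma> p'"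
proof (induction rule: lan_rel.induct)
  case (gen h g x)
  then show ?case
    using Bmor_is_mor[OF gen(1)] sigma_Tmap[OF gen(1)]
    by (simp add: lan_sigma_elem_def twoE_map_mcomp)
qed auto

lemma lan_sigma_eq:
  assumes C: "C \<in> lan_ob Bob Bmor Tob Tmap t" and p: "p \<in> C"
  shows "lan_sigma b \<epsilon> \<sigma> C = lan_sigma_elem b \<epsilon> \<sigma> p"
proof -
  obtain p0 where C_eq: "C = lan_rel Bob Bmor Tob Tmap t `` {p0}"
    using C unfolding lan_ob_def by (rule quotientE)
  have "lan_sigma_elem b \<epsilon> \<sigma> q = lan_sigma_elem b \<epsilon> \<sigma> p0" if "q \<in> C" for q
    using that C_eq lan_sigma_elem_lan_rel by (metis Image_singleton_iff)
  moreover have "(SOME q. q \<in> C) \<in> C" using p by (rule someI)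
  ultimately have "lan_sigma_elem b \<epsilon> \<sigma> (SOME q. q \<in> C) = lan_sigma_elem b \<epsilon> \<sigma> p"
    using p by simp
  then show ?thesis by (simp add: lan_sigma_def lan_sigma_elem_def)
qed

lemma lan_sigma_in_Env:
  assumes C: "C \<in> lan_ob Bob Bmor Tob Tmap t"
  shows "lan_sigma b \<epsilon> \<sigma> C \<in> Env b t \<times> Env b t"
proof -
  obtain \<beta> g x where p: "(\<beta>, g, x) \<in> lan_elems Bob Tob t"
    and C_eq: "C = lan_rel Bob Bmor Tob Tmap t `` {(\<beta>, g, x)}"
    using C unfolding lan_ob_def by (auto elim!: quotientE)
  then have "(\<beta>, g, x) \<in> C" using lan_rel.refl by blast
  then have "lan_sigma b \<epsilon> \<sigma> C = twoE_map b \<epsilon> g (\<sigma> \<beta> x)"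
    using lan_sigma_eq[OF C] by (simp add: lan_sigma_elem_def)
  moreover have "mtgt g = t" using p by (simp add: lan_elems_def)
  ultimately show ?thesis using env_map_in_Env[of b \<epsilon> g] by (auto simp: twoE_map_def)
qed

lemma lan_rel_lan_push:
  assumes "(p, p') \<in> lan_rel Bob Bmor Tob Tmap t" and l: "is_mor l" "msrc l = t"
  shows "(lan_push l p, lan_push l p') \<in> lan_rel Bob Bmor Tob Tmap (mtgt l)"
  using assms(1)
proof (induction rule: lan_rel.induct)
  case (gen h g x)
  have "is_mor h" using Bmor_is_mor[OF gen(1)] by simp
  then have "mcomp l (mcomp g h) = mcomp (mcomp l g) h"
    using mcomp_assoc[OF gen(2)] gen(3) by simp
  moreover have "is_mor (mcomp l g)" using is_mor_mcomp[OF l(1) gen(2)] gen(4) l(2) by simp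
  then have "((msrc h, mcomp (mcomp l g) h, x), (mtgt h, mcomp l g, Tmap h x))
      \<in> lan_rel Bob Bmor Tob Tmap (mtgt l)"
    by (rule lan_rel.gen[OF gen(1)]) (use gen in simp_all)
  ultimately show ?case by simp
next
  case (refl p)
  obtain \<beta> g x where p: "p = (\<beta>, g, x)" by (cases p)
  with refl have "\<beta> \<in> Bob" "is_mor g" "msrc g = \<beta>" "mtgt g = t" "x \<in> Tob \<beta>"
    by (simp_all add: lan_elems_def)
  then have "lan_push l p \<in> lan_elems Bob Tob (mtgt l)"
    using p l is_mor_mcomp[OF l(1)] by (simp add: lan_elems_def)
  then show ?case by (rule lan_rel.refl)
qed (auto intro: lan_rel.sym lan_rel.trans)

lemma lan_map_class:
  assumes p: "p \<in> lan_elems Bob Tob t" and l: "is_mor l" "msrc l = t"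
  shows "lan_map Bob Bmor Tob Tmap l (lan_rel Bob Bmor Tob Tmap t `` {p})
    = lan_rel Bob Bmor Tob Tmap (mtgt l) `` {lan_push l p}"
proof -
  have "trans (lan_rel Bob Bmor Tob Tmap (mtgt l))" by (rule transI) (rule lan_rel.trans)
  then show ?thesis
    unfolding lan_map_def
    by (rule Image_image_Image_singleton[OF _ lan_rel.refl[OF p] lan_rel_lan_push[OF _ l]])
qed

lemma lan_map_in_lan_ob:
  assumes C: "C \<in> lan_ob Bob Bmor Tob Tmap t" and l: "is_mor l" "msrc l = t"
  shows "lan_map Bob Bmor Tob Tmap l C \<in> lan_ob Bob Bmor Tob Tmap (mtgt l)"
proof -
  obtain p where p: "p \<in> lan_elems Bob Tob t" and C_eq: "C = lan_rel Bob Bmor Tob Tmap t `` {p}"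
    using C unfolding lan_ob_def by (rule quotientE)
  have "lan_push l p \<in> lan_elems Bob Tob (mtgt l)"
    using lan_rel_lan_push[OF lan_rel.refl[OF p] l] lan_rel_in_lan_elems by blast
  then show ?thesis unfolding C_eq lan_map_class[OF p l] lan_ob_def by (rule quotientI)
qed

lemma lan_sigma_lan_map:
  assumes C: "C \<in> lan_ob Bob Bmor Tob Tmap t" and l: "is_mor l" "msrc l = t"
  shows "lan_sigma b \<epsilon> \<sigma> (lan_map Bob Bmor Tob Tmap l C) = twoE_map b \<epsilon> l (lan_sigma b \<epsilon> \<sigma> C)"
proof -
  obtain \<beta> g x where p: "(\<beta>, g, x) \<in> lan_elems Bob Tob t"
    and C_eq: "C = lan_rel Bob Bmor Tob Tmap t `` {(\<beta>, g, x)}"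
    using C unfolding lan_ob_def by (auto elim!: quotientE)
  have g: "is_mor g" "mtgt g = t" using p by (simp_all add: lan_elems_def)
  have p_in: "(\<beta>, g, x) \<in> C" using C_eq lan_rel.refl[OF p] by blast
  have push: "lan_push l (\<beta>, g, x) \<in> lan_map Bob Bmor Tob Tmap l C"
    unfolding C_eq lan_map_class[OF p l] using lan_rel_lan_push[OF lan_rel.refl[OF p] l] by simp
  have "lan_sigma b \<epsilon> \<sigma> (lan_map Bob Bmor Tob Tmap l C) = twoE_map b \<epsilon> (mcomp l g) (\<sigma> \<beta> x)"
    using lan_sigma_eq[OF lan_map_in_lan_ob[OF C l] push] by (simp add: lan_sigma_elem_def)
  also have "\<dots> = twoE_map b \<epsilon> l (twoE_map b \<epsilon> g (\<sigma> \<beta> x))"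
    using twoE_map_mcomp[OF l(1) g(1)] g(2) l(2) by simp
  also have "twoE_map b \<epsilon> g (\<sigma> \<beta> x) = lan_sigma b \<epsilon> \<sigma> C"
    using lan_sigma_eq[OF C p_in] by (simp add: lan_sigma_elem_def)
  finally show ?thesis .
qed

lemma fml_sigma_in_FE_ob:
  assumes "A \<in> FLan_ob Bob Bmor Tob Tmap t"
  shows "fml_sigma b \<epsilon> \<sigma> A \<in> FE_ob b t"
proof -
  have fin: "finite A" and "A \<subseteq> lan_ob Bob Bmor Tob Tmap t"
    using assms by (simp_all add: FLan_ob_def FinPow_def)
  then have "lan_sigma b \<epsilon> \<sigma> ` A \<subseteq> Env b t \<times> Env b t" using lan_sigma_in_Env by blast
  then show ?thesis using fin by (force simp: fml_sigma_def fml_eq FE_ob_def FinPow_def)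
qed

lemma FLan_map_in_FLan_ob:
  assumes "A \<in> FLan_ob Bob Bmor Tob Tmap t" and "is_mor l" "msrc l = t"
  shows "FLan_map Bob Bmor Tob Tmap l A \<in> FLan_ob Bob Bmor Tob Tmap (mtgt l)"
  using assms(1) lan_map_in_lan_ob[OF _ assms(2,3)]
  by (auto simp: FLan_map_def FLan_ob_def FinPow_def)

lemma fml_sigma_FLan_map:
  assumes "A \<in> FLan_ob Bob Bmor Tob Tmap t" and "is_mor l" "msrc l = t"
  shows "fml_sigma b \<epsilon> \<sigma> (FLan_map Bob Bmor Tob Tmap l A) = FE_map b \<epsilon> l (fml_sigma b \<epsilon> \<sigma> A)"
proof -
  have "lan_sigma b \<epsilon> \<sigma> ` FLan_map Bob Bmor Tob Tmap l A = twoE_map b \<epsilon> l ` lan_sigma b \<epsilon> \<sigma> ` A"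
    using assms(1) lan_sigma_lan_map[OF _ assms(2,3)]
    by (auto simp: FLan_map_def FLan_ob_def FinPow_def image_image intro!: image_cong)
  then show ?thesis
    by (simp add: fml_sigma_def fml_eq FE_map_def twoE_map_def image_Un image_image)
qed

section \<open>The functor D_E T\<close>

lemma recmap_eq_iff:
  assumes "A \<in> FLan_ob Bob Bmor Tob Tmap t" and "A' \<in> FLan_ob Bob Bmor Tob Tmap t"
  shows "recmap D b \<epsilon> \<sigma> t A = recmap D b \<epsilon> \<sigma> t A'
    \<longleftrightarrow> (fml_sigma b \<epsilon> \<sigma> A, fml_sigma b \<epsilon> \<sigma> A') \<in> D_cong D (FE_ob b) (FE_map b \<epsilon>) t"
  unfolding recmap_def qD_def fml_sigma_def[symmetric]
  using fml_sigma_in_FE_ob[OF assms(1)] fml_sigma_in_FE_ob[OF assms(2)]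
  by (rule eq_equiv_class_iff[OF equiv_D_cong_FE])

lemma DET_cong_eq_rec_pb: "DET_cong D b \<epsilon> Bob Bmor Tob Tmap \<sigma> t = rec_pb D b \<epsilon> Bob Bmor Tob Tmap \<sigma> t"
proof -
  have "equiv (FLan_ob Bob Bmor Tob Tmap t) (rec_pb D b \<epsilon> Bob Bmor Tob Tmap \<sigma> t)"
    by (auto simp: rec_pb_def intro!: equivI refl_onI symI transI)
  moreover have "(A \<union> B, A' \<union> B') \<in> rec_pb D b \<epsilon> Bob Bmor Tob Tmap \<sigma> t"
    if "(A, A') \<in> rec_pb D b \<epsilon> Bob Bmor Tob Tmap \<sigma> t" "(B, B') \<in> rec_pb D b \<epsilon> Bob Bmor Tob Tmap \<sigma> t"
    for A A' B B'
  proof -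
    have F: "A \<union> B \<in> FLan_ob Bob Bmor Tob Tmap t" "A' \<union> B' \<in> FLan_ob Bob Bmor Tob Tmap t"
      using that by (auto simp: rec_pb_def FLan_ob_def intro: FinPow_Un)
    have "(fml_sigma b \<epsilon> \<sigma> A, fml_sigma b \<epsilon> \<sigma> A') \<in> D_cong D (FE_ob b) (FE_map b \<epsilon>) t"
      and "(fml_sigma b \<epsilon> \<sigma> B, fml_sigma b \<epsilon> \<sigma> B') \<in> D_cong D (FE_ob b) (FE_map b \<epsilon>) t"
      using that by (auto simp: rec_pb_def recmap_eq_iff)
    then have "(fml_sigma b \<epsilon> \<sigma> A \<union> fml_sigma b \<epsilon> \<sigma> B, fml_sigma b \<epsilon> \<sigma> A' \<union> fml_sigma b \<epsilon> \<sigma> B')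
        \<in> D_cong D (FE_ob b) (FE_map b \<epsilon>) t"
      unfolding D_cong_def by (rule ucong.union)
    then show ?thesis
      using F by (simp add: rec_pb_def recmap_eq_iff fml_sigma_def fml_def image_Un)
  qed
  ultimately show ?thesis unfolding DET_cong_def by (simp add: ucong_eq_self)
qed

lemma DET_cong_iff:
  "(A, A') \<in> DET_cong D b \<epsilon> Bob Bmor Tob Tmap \<sigma> t \<longleftrightarrow>
    A \<in> FLan_ob Bob Bmor Tob Tmap t \<and> A' \<in> FLan_ob Bob Bmor Tob Tmap t \<and>
    (fml_sigma b \<epsilon> \<sigma> A, fml_sigma b \<epsilon> \<sigma> A') \<in> D_cong D (FE_ob b) (FE_map b \<epsilon>) t"
  unfolding DET_cong_eq_rec_pb rec_pb_def using recmap_eq_iff by blast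

lemma equiv_DET_cong: "equiv (FLan_ob Bob Bmor Tob Tmap t) (DET_cong D b \<epsilon> Bob Bmor Tob Tmap \<sigma> t)"
  by (auto simp: DET_cong_eq_rec_pb rec_pb_def intro!: equivI refl_onI symI transI)

lemma DET_map_class:
  assumes A: "A \<in> FLan_ob Bob Bmor Tob Tmap t" and l: "is_mor l" "msrc l = t"
  shows "DET_map D b \<epsilon> Bob Bmor Tob Tmap \<sigma> l (DET_cong D b \<epsilon> Bob Bmor Tob Tmap \<sigma> t `` {A})
    = DET_cong D b \<epsilon> Bob Bmor Tob Tmap \<sigma> (mtgt l) `` {FLan_map Bob Bmor Tob Tmap l A}"
  unfolding DET_map_def
proof (rule Image_image_Image_singleton)
  show "trans (DET_cong D b \<epsilon> Bob Bmor Tob Tmap \<sigma> (mtgt l))"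
    using equiv_DET_cong by (rule equivE)
  show "(A, A) \<in> DET_cong D b \<epsilon> Bob Bmor Tob Tmap \<sigma> t"
    using equiv_DET_cong A unfolding equiv_def refl_on_def by blast
  show "(FLan_map Bob Bmor Tob Tmap l B, FLan_map Bob Bmor Tob Tmap l B')
      \<in> DET_cong D b \<epsilon> Bob Bmor Tob Tmap \<sigma> (mtgt l)"
    if "(B, B') \<in> DET_cong D b \<epsilon> Bob Bmor Tob Tmap \<sigma> t" for B B'
  proof -
    have "B \<in> FLan_ob Bob Bmor Tob Tmap t" "B' \<in> FLan_ob Bob Bmor Tob Tmap t"
      and "(fml_sigma b \<epsilon> \<sigma> B, fml_sigma b \<epsilon> \<sigma> B') \<in> D_cong D (FE_ob b) (FE_map b \<epsilon>) t"
      using that by (simp_all add: DET_cong_iff)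
    then show ?thesis
      by (simp add: DET_cong_iff FLan_map_in_FLan_ob[OF _ l] fml_sigma_FLan_map[OF _ l]
          D_cong_FE_map[OF l])
  qed
qed

lemma FE_map_eq_if_DET_map_eq:
  assumes irr: "irreducible D (FE_ob b) (FE_map b \<epsilon>) (mtgt l)" and l: "is_mor l" "msrc l = t"
    and A: "A \<in> FLan_ob Bob Bmor Tob Tmap t" and A': "A' \<in> FLan_ob Bob Bmor Tob Tmap t"
    and eq: "DET_map D b \<epsilon> Bob Bmor Tob Tmap \<sigma> l (DET_cong D b \<epsilon> Bob Bmor Tob Tmap \<sigma> t `` {A})
      = DET_map D b \<epsilon> Bob Bmor Tob Tmap \<sigma> l (DET_cong D b \<epsilon> Bob Bmor Tob Tmap \<sigma> t `` {A'})"
  shows "FE_map b \<epsilon> l (fml_sigma b \<epsilon> \<sigma> A) = FE_map b \<epsilon> l (fml_sigma b \<epsilon> \<sigma> A')"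
proof -
  have "(FLan_map Bob Bmor Tob Tmap l A, FLan_map Bob Bmor Tob Tmap l A')
      \<in> DET_cong D b \<epsilon> Bob Bmor Tob Tmap \<sigma> (mtgt l)"
    using eq FLan_map_in_FLan_ob[OF A l] FLan_map_in_FLan_ob[OF A' l]
    by (simp add: DET_map_class[OF A l] DET_map_class[OF A' l] eq_equiv_class_iff[OF equiv_DET_cong])
  then have "(FE_map b \<epsilon> l (fml_sigma b \<epsilon> \<sigma> A), FE_map b \<epsilon> l (fml_sigma b \<epsilon> \<sigma> A'))
      \<in> D_cong D (FE_ob b) (FE_map b \<epsilon>) (mtgt l)"
    by (simp add: DET_cong_iff fml_sigma_FLan_map[OF A l] fml_sigma_FLan_map[OF A' l])
  then show ?thesis by (rule D_cong_irreducible_eq[OF irr])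
qed

lemma fml_sigma_kpair_if_DET_map_eq:
  assumes legs: "\<And>l. l \<in> set (snd \<rho>) \<Longrightarrow>
      is_mor l \<and> msrc l = fst \<rho> \<and> irreducible D (FE_ob b) (FE_map b \<epsilon>) (mtgt l)"
    and A: "A \<in> FLan_ob Bob Bmor Tob Tmap (fst \<rho>)" and A': "A' \<in> FLan_ob Bob Bmor Tob Tmap (fst \<rho>)"
    and eq: "\<And>l. l \<in> set (snd \<rho>) \<Longrightarrow>
      DET_map D b \<epsilon> Bob Bmor Tob Tmap \<sigma> l (DET_cong D b \<epsilon> Bob Bmor Tob Tmap \<sigma> (fst \<rho>) `` {A})
      = DET_map D b \<epsilon> Bob Bmor Tob Tmap \<sigma> l (DET_cong D b \<epsilon> Bob Bmor Tob Tmap \<sigma> (fst \<rho>) `` {A'})"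
  shows "(fml_sigma b \<epsilon> \<sigma> A, fml_sigma b \<epsilon> \<sigma> A') \<in> kpair (FE_ob b) (FE_map b \<epsilon>) \<rho>"
proof -
  have "FE_map b \<epsilon> l (fml_sigma b \<epsilon> \<sigma> A) = FE_map b \<epsilon> l (fml_sigma b \<epsilon> \<sigma> A')"
    if l: "l \<in> set (snd \<rho>)" for l
    using legs[OF l] FE_map_eq_if_DET_map_eq[OF _ _ _ A A' eq[OF l]] by blast
  then show ?thesis using fml_sigma_in_FE_ob[OF A] fml_sigma_in_FE_ob[OF A'] by (simp add: kpair_def)
qed

end

theorem mainTheorem10:
  fixes D :: "nat \<Rightarrow> ('o::preorder) cone set" and b :: 'o and \<epsilon> :: 'e
    and Bob :: "'o seg set" and Bmor :: "'o smor set"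
    and Tob :: "'o seg \<Rightarrow> 'x set" and Tmap :: "'o smor \<Rightarrow> 'x \<Rightarrow> 'x"
    and \<sigma> :: "'o seg \<Rightarrow> 'x \<Rightarrow> (nat \<Rightarrow> 'e) \<times> (nat \<Rightarrow> 'e)"
  assumes "recomb_chromology D"
    and "recomb_scheme D (FE_ob b :: 'o seg \<Rightarrow> (nat \<Rightarrow> 'e) set set) (FE_map b \<epsilon>)"
    and "seq_alignment b \<epsilon> Bob Bmor Tob Tmap \<sigma>"
  shows "mon_pedigrad D (DET_ob D b \<epsilon> Bob Bmor Tob Tmap \<sigma>) (DET_map D b \<epsilon> Bob Bmor Tob Tmap \<sigma>)"
  unfolding mon_pedigrad_def
proof (intro allI ballI inj_onI)
  fix n \<rho> K K'
  assume \<rho>: "\<rho> \<in> D n" and K: "K \<in> DET_ob D b \<epsilon> Bob Bmor Tob Tmap \<sigma> (fst \<rho>)"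
    and K': "K' \<in> DET_ob D b \<epsilon> Bob Bmor Tob Tmap \<sigma> (fst \<rho>)"
    and eq: "map (\<lambda>l. DET_map D b \<epsilon> Bob Bmor Tob Tmap \<sigma> l K) (snd \<rho>) =
             map (\<lambda>l. DET_map D b \<epsilon> Bob Bmor Tob Tmap \<sigma> l K') (snd \<rho>)"
  let ?R = "DET_cong D b \<epsilon> Bob Bmor Tob Tmap \<sigma> (fst \<rho>)"
  obtain A A' where A: "A \<in> FLan_ob Bob Bmor Tob Tmap (fst \<rho>)" "K = ?R `` {A}"
    and A': "A' \<in> FLan_ob Bob Bmor Tob Tmap (fst \<rho>)" "K' = ?R `` {A'}"
    using K K' unfolding DET_ob_def by (auto elim!: quotientE)
  have apex: "is_seg (fst \<rho>)"
    and legs: "\<And>l. l \<in> set (snd \<rho>) \<Longrightarrow>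
      is_mor l \<and> msrc l = fst \<rho> \<and> irreducible D (FE_ob b) (FE_map b \<epsilon>) (mtgt l)"
    using assms(1,2) \<rho> by (auto simp: recomb_chromology_def cone_in_def recomb_scheme_def)
  have "(fml_sigma b \<epsilon> \<sigma> A, fml_sigma b \<epsilon> \<sigma> A') \<in> kpair (FE_ob b) (FE_map b \<epsilon>) \<rho>"
    using eq unfolding A(2) A'(2) map_eq_conv
    by (intro fml_sigma_kpair_if_DET_map_eq[OF assms(3) legs A(1) A'(1)]) blast+
  then have "(fml_sigma b \<epsilon> \<sigma> A, fml_sigma b \<epsilon> \<sigma> A') \<in> D_cong D (FE_ob b) (FE_map b \<epsilon>) (fst \<rho>)"
    by (rule kpair_in_D_cong[of \<rho> D n, OF \<rho> apex])
  then show "K = K'"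
    using A A' by (simp add: eq_equiv_class_iff[OF equiv_DET_cong[OF assms(3)]]
        DET_cong_iff[OF assms(3)])
qed

end
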